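(* Let $\mathcal{S}=\{1,\dots,K\}$ be a finite set of settings. For each $i\in\mathcal{S}$ suppose $Y^i=\theta^iD^i+f^i(X^i,A^i)+\varepsilon^i$ with $E[\varepsilon^i\mid D^i,X^i,A^i]=0$ ($D^i$ real-valued treatment, $X^i$ observed, $A^i$ unobserved covariates), let $\theta^i_s$ be the short-regression parameter omitting $A^i$, let $B^i=\theta^i_s-\theta^i$, and assume $B^i\in[\nu^i_l,\nu^i_u]$ for known $\nu^i_l\le\nu^i_u$. For every pair $(j,k)$ assume $B^j=\rho^{jk}B^k$ with $\rho^{jk}\in[\rho^{jk}_l,\rho^{jk}_u]$, $0<\rho^{jk}_l\le1\le\rho^{jk}_u$ known. Define $\mathcal{I}^i=[\theta^i_s-\nu^i_u,\theta^i_s-\nu^i_l]$, $c^{jk}_l,c^{jk}_u$ as the min and max of $\{(\rho^{jk}_l-1)\nu^k_l,(\rho^{jk}_u-1)\nu^k_l,(\rho^{jk}_l-1)\nu^k_u,(\rho^{jk}_u-1)\nu^k_u\}$, and $\mathcal{I}^D_{jk}=[(\theta^j_s-\theta^k_s)-c^{jk}_u,(\theta^j_s-\theta^k_s)-c^{jk}_l]$. Then the true vector $(\theta^1,\dots,\theta^K)$ belongs to the polytope \[ \mathcal{J}=\{(\theta^1,\dots,\theta^K):\theta^i\in\mathcal{I}^i\ \forall i,\ \theta^j-\theta^k\in\mathcal{I}^D_{jk}\ \forall (j,k)\}, \] which is defined by at most $2K+K(K-1)$ linear inequality constraints in $K$ unknowns. The marginal identified set for any $\theta^i$ is the interval $[\underline{\theta}^i,\overline{\theta}^i]$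 with $\underline{\theta}^i=\min_{\mathcal{J}}\theta^i$ and $\overline{\theta}^i=\max_{\mathcal{J}}\theta^i$, each of which is the solution of a linear program.
   Context: The long parameter is $\theta^i=E[Y^i\alpha^i]$ with $\alpha^i=(D^i-E[D^i\mid X^i,A^i])/E[(D^i-E[D^i\mid X^i,A^i])^2]$, and the short parameter is $\theta^i_s=E[Y^i\alpha^i_s]$ with $\alpha^i_s=(D^i-E[D^i\mid X^i])/E[(D^i-E[D^i\mid X^i])^2]$. The marginal identified set for $\theta^i$ is the projection of $\mathcal{J}$ onto the $i$-th coordinate. *)

theory Defs
  imports "HOL-Analysis.Analysis"
begin

text \<open>Settings are indexed by {1..K}; vectors (theta^1,...,theta^K) are represented as
  functions nat => real, of which only the coordinates in {1..K} matter.\<close>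

definition I_set :: "real \<Rightarrow> real \<Rightarrow> real \<Rightarrow> real set" where
  "I_set ths nul nuu = {ths - nuu .. ths - nul}"

definition c_l :: "real \<Rightarrow> real \<Rightarrow> real \<Rightarrow> real \<Rightarrow> real" where
  "c_l rl ru nul nuu = Min {(rl - 1) * nul, (ru - 1) * nul, (rl - 1) * nuu, (ru - 1) * nuu}"

definition c_u :: "real \<Rightarrow> real \<Rightarrow> real \<Rightarrow> real \<Rightarrow> real" where
  "c_u rl ru nul nuu = Max {(rl - 1) * nul, (ru - 1) * nul, (rl - 1) * nuu, (ru - 1) * nuu}"

definition ID_set :: "real \<Rightarrow> real \<Rightarrow> real \<Rightarrow> real \<Rightarrow> real \<Rightarrow> real \<Rightarrow> real set" where
  "ID_set thsj thsk rl ru nul nuu =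
     {(thsj - thsk) - c_u rl ru nul nuu .. (thsj - thsk) - c_l rl ru nul nuu}"

definition J_set :: "nat \<Rightarrow> (nat \<Rightarrow> real) \<Rightarrow> (nat \<Rightarrow> real) \<Rightarrow> (nat \<Rightarrow> real)
    \<Rightarrow> (nat \<Rightarrow> nat \<Rightarrow> real) \<Rightarrow> (nat \<Rightarrow> nat \<Rightarrow> real) \<Rightarrow> (nat \<Rightarrow> real) set" where
  "J_set K ths nul nuu rhol rhou =
     {t. (\<forall>i\<in>{1..K}. t i \<in> I_set (ths i) (nul i) (nuu i)) \<and>
         (\<forall>j\<in>{1..K}. \<forall>k\<in>{1..K}.
            t j - t k \<in> ID_set (ths j) (ths k) (rhol j k) (rhou j k) (nul k) (nuu k))}"

end

theory Submission
  imports Defs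
begin

text \<open>
  Since \<open>B\<^sup>j = \<rho>\<^sup>j\<^sup>k B\<^sup>k\<close>, we have \<open>\<theta>\<^sup>j - \<theta>\<^sup>k = (\<theta>\<^sub>s\<^sup>j - \<theta>\<^sub>s\<^sup>k) - (\<rho>\<^sup>j\<^sup>k - 1) B\<^sup>k\<close>, and a product of
  numbers from two intervals lies between the extreme products of their endpoints; this puts
  the true vector into \<open>\<J>\<close>.
  The diagonal difference bounds are vacuous because \<open>c\<^sub>l \<le> 0 \<le> c\<^sub>u\<close>, and the bounds coming
  from \<open>(j, k)\<close> and \<open>(k, j)\<close> merge into one inequality per ordered pair, which leaves
  \<open>2K + K(K - 1)\<close> inequalities. Finally, the projection of \<open>\<J>\<close> to one coordinate is convex, and
  it is compact because \<open>\<J>\<close> only constrains the finitely many coordinates in \<open>{1..K}\<close>, each to a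
  bounded interval; so it is a closed interval.
\<close>

lemma mult_between_corner_products:
  fixes x y a b c d :: "'a::linordered_idom"
  assumes "x \<in> {a..b}" "y \<in> {c..d}"
  shows "Min {a * c, b * c, a * d, b * d} \<le> x * y \<and> x * y \<le> Max {a * c, b * c, a * d, b * d}"
proof -
  have "min (a * y) (b * y) \<le> x * y \<and> x * y \<le> max (a * y) (b * y)"
    using assms mult_right_mono[of a x y] mult_right_mono[of x b y]
      mult_right_mono_neg[of a x y] mult_right_mono_neg[of x b y]
    by (cases "0 \<le> y") auto
  moreover have "min (a * c) (a * d) \<le> a * y \<and> a * y \<le> max (a * c) (a * d)"
    using assms mult_left_mono[of c y a] mult_left_mono[of y d a]
      mult_left_mono_neg[of c y a] mult_left_mono_neg[of y d a]
    by (cases "0 \<le> a") auto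
  moreover have "min (b * c) (b * d) \<le> b * y \<and> b * y \<le> max (b * c) (b * d)"
    using assms mult_left_mono[of c y b] mult_left_mono[of y d b]
      mult_left_mono_neg[of c y b] mult_left_mono_neg[of y d b]
    by (cases "0 \<le> b") auto
  ultimately show ?thesis
    by (auto simp: min_def max_def split: if_splits)
qed

lemma mult_between_c_l_c_u:
  assumes "r \<in> {rl..ru}" "b \<in> {nl..nu}"
  shows "c_l rl ru nl nu \<le> (r - 1) * b \<and> (r - 1) * b \<le> c_u rl ru nl nu"
  using mult_between_corner_products[of "r - 1" "rl - 1" "ru - 1" b nl nu] assms
  unfolding c_l_def c_u_def by auto

lemma c_l_nonpos_c_u_nonneg:
  assumes "rl \<le> 1" "1 \<le> ru" "nl \<le> nu"
  shows "c_l rl ru nl nu \<le> 0 \<and> 0 \<le> c_u rl ru nl nu"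
  using mult_between_c_l_c_u[of 1 rl ru nl nl nu] assms by simp

definition polyhedron_on :: "'a set \<Rightarrow> (('a \<Rightarrow> real) \<times> real) set \<Rightarrow> ('a \<Rightarrow> real) set" where
  "polyhedron_on I C = {t. \<forall>(a, b)\<in>C. (\<Sum>i\<in>I. a i * t i) \<le> b}"

lemma closed_polyhedron_on: "closed (polyhedron_on I C)"
proof -
  have "closed {t. (\<Sum>i\<in>I. a i * t i) \<le> b}" for a :: "'a \<Rightarrow> real" and b
    by (intro closed_Collect_le continuous_on_sum continuous_on_mult_left
        continuous_on_product_coordinates continuous_on_const)
  moreover have "polyhedron_on I C = (\<Inter>(a, b)\<in>C. {t. (\<Sum>i\<in>I. a i * t i) \<le> b})"
    unfolding polyhedron_on_def by auto
  ultimately show ?thesis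
    by auto
qed

lemma polyhedron_on_convex_combination:
  assumes "s \<in> polyhedron_on I C" "t \<in> polyhedron_on I C" "0 \<le> u" "u \<le> 1"
  shows "(\<lambda>m. (1 - u) * s m + u * t m) \<in> polyhedron_on I C"
  unfolding polyhedron_on_def
proof (clarify)
  fix a b assume "(a, b) \<in> C"
  then have "(\<Sum>i\<in>I. a i * s i) \<le> b" "(\<Sum>i\<in>I. a i * t i) \<le> b"
    using assms(1,2) unfolding polyhedron_on_def by auto
  then have "(1 - u) * (\<Sum>i\<in>I. a i * s i) + u * (\<Sum>i\<in>I. a i * t i) \<le> (1 - u) * b + u * b"
    using assms(3,4) by (intro add_mono mult_left_mono) auto
  moreover have "(\<Sum>i\<in>I. a i * ((1 - u) * s i + u * t i))
      = (1 - u) * (\<Sum>i\<in>I. a i * s i) + u * (\<Sum>i\<in>I. a i * t i)"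
    by (simp add: distrib_left sum.distrib sum_distrib_left mult.left_commute)
  ultimately show "(\<Sum>i\<in>I. a i * ((1 - u) * s i + u * t i)) \<le> b"
    by (simp add: algebra_simps)
qed

lemma polyhedron_on_restrict:
  assumes "t \<in> polyhedron_on I C"
  shows "(\<lambda>m. if m \<in> I then t m else 0) \<in> polyhedron_on I C"
  using assms unfolding polyhedron_on_def by (auto cong: sum.cong)

lemma is_interval_coordinate_image_polyhedron_on:
  "is_interval ((\<lambda>t. t i) ` polyhedron_on I C)"
  unfolding is_interval_1
proof (clarify)
  fix s t x assume s: "s \<in> polyhedron_on I C" and t: "t \<in> polyhedron_on I C"
    and x: "s i \<le> x" "x \<le> t i"
  show "x \<in> (\<lambda>t. t i) ` polyhedron_on I C"
  proof (cases "s i = t i")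
    case True
    with s x show ?thesis by (intro image_eqI[of _ _ s]) auto
  next
    case False
    define u where "u = (x - s i) / (t i - s i)"
    have gap: "0 < t i - s i"
      using x False by simp
    then have u: "0 \<le> u" "u \<le> 1"
      using x unfolding u_def by (simp_all add: divide_simps)
    have "(1 - u) * s i + u * t i = s i + u * (t i - s i)"
      by (simp add: algebra_simps)
    then have "x = (1 - u) * s i + u * t i"
      using gap unfolding u_def by simp
    then show ?thesis
      using polyhedron_on_convex_combination[OF s t u] by (rule image_eqI)
  qed
qed

lemma compact_coordinate_image:
  fixes S :: "('a \<Rightarrow> real) set"
  assumes "closed S" "i \<in> I"
    and restrict: "\<And>t. t \<in> S \<Longrightarrow> (\<lambda>m. if m \<in> I then t m else 0) \<in> S"
    and bounded: "\<And>t m. t \<in> S \<Longrightarrow> m \<in> I \<Longrightarrow> t m \<in> {l m..u m}"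
  shows "compact ((\<lambda>t. t i) ` S)"
proof -
  define P where "P = PiE UNIV (\<lambda>m. if m \<in> I then {l m..u m} else {0})"
  have "compactin (product_topology (\<lambda>_. euclidean) UNIV) P"
    unfolding P_def compactin_PiE by auto
  then have "compact (S \<inter> P)"
    using \<open>closed S\<close> by (simp add: euclidean_product_topology compact_Int_closed Int_commute)
  moreover have "(\<lambda>t. t i) ` S = (\<lambda>t. t i) ` (S \<inter> P)"
  proof
    show "(\<lambda>t. t i) ` S \<subseteq> (\<lambda>t. t i) ` (S \<inter> P)"
    proof clarify
      fix t assume "t \<in> S"
      then have "(\<lambda>m. if m \<in> I then t m else 0) \<in> S \<inter> P"
        using restrict bounded unfolding P_def by auto
      then show "t i \<in> (\<lambda>t. t i) ` (S \<inter> P)"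
        using \<open>i \<in> I\<close> by (intro image_eqI) auto
    qed
  qed auto
  ultimately show ?thesis
    by (metis compact_continuous_image continuous_on_product_coordinates continuous_on_subset subset_UNIV)
qed

lemma coordinate_image_polyhedron_on:
  assumes "polyhedron_on I C \<noteq> {}" "i \<in> I"
    and "\<forall>t\<in>polyhedron_on I C. \<forall>m\<in>I. t m \<in> {l m..u m}"
  shows "\<exists>lo hi. lo \<le> hi \<and> (\<lambda>t. t i) ` polyhedron_on I C = {lo..hi}"
proof -
  have "compact ((\<lambda>t. t i) ` polyhedron_on I C)"
    using closed_polyhedron_on assms(2) polyhedron_on_restrict assms(3)[rule_format]
    by (rule compact_coordinate_image)
  then obtain lo hi where "(\<lambda>t. t i) ` polyhedron_on I C = {lo..hi}"
    using connected_compact_interval_1 is_interval_connected_1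
      is_interval_coordinate_image_polyhedron_on by metis
  with assms(1) show ?thesis
    by (metis atLeastatMost_empty_iff image_is_empty)
qed

definition diff_bound_set :: "'a set \<Rightarrow> ('a \<Rightarrow> real) \<Rightarrow> ('a \<Rightarrow> real)
    \<Rightarrow> ('a \<Rightarrow> 'a \<Rightarrow> real) \<Rightarrow> ('a \<Rightarrow> 'a \<Rightarrow> real) \<Rightarrow> ('a \<Rightarrow> real) set" where
  "diff_bound_set I l u L U =
     {t. (\<forall>i\<in>I. t i \<in> {l i..u i}) \<and> (\<forall>j\<in>I. \<forall>k\<in>I. t j - t k \<in> {L j k..U j k})}"

text \<open>The lower bound \<open>L j k\<close> on \<open>t j - t k\<close> is the upper bound \<open>-L j k\<close> on \<open>t k - t j\<close>, so
  each ordered off-diagonal pair \<open>(j, k)\<close> carries the single inequality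
  \<open>t j - t k \<le> min (U j k) (-L k j)\<close>.\<close>

definition diff_bound_constraints :: "'a set \<Rightarrow> ('a \<Rightarrow> real) \<Rightarrow> ('a \<Rightarrow> real)
    \<Rightarrow> ('a \<Rightarrow> 'a \<Rightarrow> real) \<Rightarrow> ('a \<Rightarrow> 'a \<Rightarrow> real) \<Rightarrow> (('a \<Rightarrow> real) \<times> real) set" where
  "diff_bound_constraints I l u L U =
     (\<lambda>i. (indicator {i}, u i)) ` I \<union> (\<lambda>i. (- indicator {i}, - l i)) ` I \<union>
     (\<lambda>(j, k). (indicator {j} - indicator {k}, min (U j k) (- L k j))) ` (I \<times> I - Id_on I)"

lemma sum_indicator_singleton_mult:
  assumes "finite I" "i \<in> I"
  shows "(\<Sum>m\<in>I. indicator {i} m * t m) = (t i :: real)"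
  using assms by (simp add: indicator_def if_distrib cong: if_cong)

lemma card_off_diagonal:
  assumes "finite I"
  shows "card (I \<times> I - Id_on I) = card I * (card I - 1)"
proof -
  have "Id_on I = (\<lambda>i. (i, i)) ` I"
    by auto
  then have "card (Id_on I) = card I"
    by (simp add: card_image inj_on_def)
  moreover have "Id_on I \<subseteq> I \<times> I"
    by auto
  ultimately show ?thesis
    using assms by (simp add: card_Diff_subset finite_subset card_cartesian_product diff_mult_distrib2)
qed

lemma card_diff_bound_constraints:
  assumes "finite I"
  shows "finite (diff_bound_constraints I l u L U)"
    and "card (diff_bound_constraints I l u L U) \<le> 2 * card I + card I * (card I - 1)"
proof -
  show "finite (diff_bound_constraints I l u L U)"
    using assms unfolding diff_bound_constraints_def by auto
  have "card (diff_bound_constraints I l u L U) \<le> card I + card I + card (I \<times> I - Id_on I)"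
    unfolding diff_bound_constraints_def
    by (intro card_Un_le[THEN order_trans] add_mono card_image_le) (use assms in auto)
  then show "card (diff_bound_constraints I l u L U) \<le> 2 * card I + card I * (card I - 1)"
    using card_off_diagonal[OF assms] by simp
qed

lemma polyhedron_on_diff_bound_constraints_iff:
  assumes "finite I"
  shows "t \<in> polyhedron_on I (diff_bound_constraints I l u L U) \<longleftrightarrow>
    (\<forall>i\<in>I. t i \<in> {l i..u i}) \<and>
    (\<forall>j\<in>I. \<forall>k\<in>I. j \<noteq> k \<longrightarrow> t j - t k \<le> U j k \<and> t j - t k \<le> - L k j)"
proof -
  have unit: "(\<Sum>m\<in>I. indicator {i} m * t m) = t i" if "i \<in> I" for i
    using sum_indicator_singleton_mult[OF assms that] .
  have neg: "(\<Sum>m\<in>I. - (indicator {i} m * t m)) = - t i" if "i \<in> I" for i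
    using unit[OF that] by (simp add: sum_negf)
  have diff: "(\<Sum>m\<in>I. (indicator {j} m - indicator {k} m) * t m) = t j - t k"
    if "j \<in> I" "k \<in> I" for j k
    using unit[OF that(1)] unit[OF that(2)] by (simp add: left_diff_distrib sum_subtractf)
  have off_diagonal: "(\<forall>x\<in>I \<times> I - Id_on I. P x) \<longleftrightarrow> (\<forall>j\<in>I. \<forall>k\<in>I. j \<noteq> k \<longrightarrow> P (j, k))"
    for P :: "'a \<times> 'a \<Rightarrow> bool"
    by (auto simp: Id_on_iff)
  show ?thesis
    unfolding polyhedron_on_def diff_bound_constraints_def
    by (auto simp: unit neg diff off_diagonal Ball_image_comp ball_Un)
qed

lemma diff_bound_set_eq_polyhedron_on:
  assumes "finite I" and diagonal: "\<forall>k\<in>I. L k k \<le> 0 \<and> 0 \<le> U k k"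
  shows "diff_bound_set I l u L U = polyhedron_on I (diff_bound_constraints I l u L U)"
proof -
  have pairs: "(\<forall>j\<in>I. \<forall>k\<in>I. t j - t k \<in> {L j k..U j k}) \<longleftrightarrow>
    (\<forall>j\<in>I. \<forall>k\<in>I. j \<noteq> k \<longrightarrow> t j - t k \<le> U j k \<and> t j - t k \<le> - L k j)" for t :: "'a \<Rightarrow> real"
    using diagonal by (metis atLeastAtMost_iff diff_self minus_diff_eq neg_le_iff_le)
  show ?thesis
    unfolding set_eq_iff diff_bound_set_def mem_Collect_eq pairs
      polyhedron_on_diff_bound_constraints_iff[OF assms(1)] by simp
qed

lemma J_set_eq_diff_bound_set:
  "J_set K ths nul nuu rhol rhou =
     diff_bound_set {1..K} (\<lambda>i. ths i - nuu i) (\<lambda>i. ths i - nul i)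
       (\<lambda>j k. ths j - ths k - c_u (rhol j k) (rhou j k) (nul k) (nuu k))
       (\<lambda>j k. ths j - ths k - c_l (rhol j k) (rhou j k) (nul k) (nuu k))"
  unfolding J_set_def diff_bound_set_def I_set_def ID_set_def ..

lemma J_set_polyhedron:
  assumes "\<forall>i\<in>{1..K}. nul i \<le> nuu i"
    and "\<forall>j\<in>{1..K}. \<forall>k\<in>{1..K}. rhol j k \<le> 1"
    and "\<forall>j\<in>{1..K}. \<forall>k\<in>{1..K}. 1 \<le> rhou j k"
  obtains C where "finite C" "card C \<le> 2 * K + K * (K - 1)"
    "J_set K ths nul nuu rhol rhou = polyhedron_on {1..K} C"
proof -
  have "\<forall>k\<in>{1..K}. c_l (rhol k k) (rhou k k) (nul k) (nuu k) \<le> 0 \<and>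
      0 \<le> c_u (rhol k k) (rhou k k) (nul k) (nuu k)"
    using assms c_l_nonpos_c_u_nonneg by blast
  then have "J_set K ths nul nuu rhol rhou = polyhedron_on {1..K} (diff_bound_constraints {1..K}
      (\<lambda>i. ths i - nuu i) (\<lambda>i. ths i - nul i)
      (\<lambda>j k. ths j - ths k - c_u (rhol j k) (rhou j k) (nul k) (nuu k))
      (\<lambda>j k. ths j - ths k - c_l (rhol j k) (rhou j k) (nul k) (nuu k)))"
    unfolding J_set_eq_diff_bound_set by (intro diff_bound_set_eq_polyhedron_on) auto
  from that[OF _ _ this] show ?thesis
    using card_diff_bound_constraints[of "{1..K}"] by simp
qed

lemma J_set_coordinate_bounds:
  "\<forall>t\<in>J_set K ths nul nuu rhol rhou. \<forall>i\<in>{1..K}. t i \<in> {ths i - nuu i..ths i - nul i}"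
  unfolding J_set_def I_set_def by blast

lemma true_parameters_mem_J_set:
  assumes "\<forall>i\<in>{1..K}. B i = ths i - theta i" "\<forall>i\<in>{1..K}. B i \<in> {nul i..nuu i}"
    and "\<forall>j\<in>{1..K}. \<forall>k\<in>{1..K}. rho j k \<in> {rhol j k..rhou j k}"
    and "\<forall>j\<in>{1..K}. \<forall>k\<in>{1..K}. B j = rho j k * B k"
  shows "theta \<in> J_set K ths nul nuu rhol rhou"
  unfolding J_set_eq_diff_bound_set diff_bound_set_def mem_Collect_eq
proof (intro conjI ballI)
  fix i assume "i \<in> {1..K}"
  then have "B i = ths i - theta i" "B i \<in> {nul i..nuu i}"
    using assms(1,2) by blast+
  then show "theta i \<in> {ths i - nuu i..ths i - nul i}"
    by auto
next
  fix j k assume j: "j \<in> {1..K}" and k: "k \<in> {1..K}"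
  have "B j = rho j k * B k" "B j = ths j - theta j" "B k = ths k - theta k"
    using assms(1,4) j k by blast+
  then have "theta j - theta k = ths j - ths k - (rho j k - 1) * B k"
    unfolding left_diff_distrib by linarith
  moreover have "c_l (rhol j k) (rhou j k) (nul k) (nuu k) \<le> (rho j k - 1) * B k \<and>
      (rho j k - 1) * B k \<le> c_u (rhol j k) (rhou j k) (nul k) (nuu k)"
    using assms(2,3) j k by (intro mult_between_c_l_c_u) auto
  ultimately show "theta j - theta k \<in> {ths j - ths k - c_u (rhol j k) (rhou j k) (nul k) (nuu k)
      ..ths j - ths k - c_l (rhol j k) (rhou j k) (nul k) (nuu k)}"
    by auto
qed

theorem proposition4:
  fixes K :: nat
    and theta theta_s B nu_l nu_u :: "nat \<Rightarrow> real"
    and rho rho_l rho_u :: "nat \<Rightarrow> nat \<Rightarrow> real"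
  assumes B_def: "\<forall>i\<in>{1..K}. B i = theta_s i - theta i"
    and nu_le: "\<forall>i\<in>{1..K}. nu_l i \<le> nu_u i"
    and B_bounds: "\<forall>i\<in>{1..K}. B i \<in> {nu_l i .. nu_u i}"
    and rho_l_pos: "\<forall>j\<in>{1..K}. \<forall>k\<in>{1..K}. 0 < rho_l j k"
    and rho_l_le1: "\<forall>j\<in>{1..K}. \<forall>k\<in>{1..K}. rho_l j k \<le> 1"
    and rho_u_ge1: "\<forall>j\<in>{1..K}. \<forall>k\<in>{1..K}. 1 \<le> rho_u j k"
    and rho_bounds: "\<forall>j\<in>{1..K}. \<forall>k\<in>{1..K}. rho j k \<in> {rho_l j k .. rho_u j k}"
    and B_ratio: "\<forall>j\<in>{1..K}. \<forall>k\<in>{1..K}. B j = rho j k * B k"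
  shows "theta \<in> J_set K theta_s nu_l nu_u rho_l rho_u
    \<and> (\<exists>C :: ((nat \<Rightarrow> real) \<times> real) set. finite C \<and> card C \<le> 2 * K + K * (K - 1) \<and>
         J_set K theta_s nu_l nu_u rho_l rho_u =
           {t. \<forall>(a, b)\<in>C. (\<Sum>i=1..K. a i * t i) \<le> b})
    \<and> (\<forall>i\<in>{1..K}. \<exists>lo hi.
         lo \<in> (\<lambda>t. t i) ` J_set K theta_s nu_l nu_u rho_l rho_u \<and>
         hi \<in> (\<lambda>t. t i) ` J_set K theta_s nu_l nu_u rho_l rho_u \<and>
         (\<forall>t\<in>J_set K theta_s nu_l nu_u rho_l rho_u. lo \<le> t i \<and> t i \<le> hi) \<and>
         (\<lambda>t. t i) ` J_set K theta_s nu_l nu_u rho_l rho_u = {lo .. hi})"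
proof -
  let ?J = "J_set K theta_s nu_l nu_u rho_l rho_u"
  have theta: "theta \<in> ?J"
    using B_def B_bounds rho_bounds B_ratio by (rule true_parameters_mem_J_set)
  obtain C where C: "finite C" "card C \<le> 2 * K + K * (K - 1)" "?J = polyhedron_on {1..K} C"
    by (rule J_set_polyhedron[OF nu_le rho_l_le1 rho_u_ge1])
  have marginal: "\<exists>lo hi. lo \<in> (\<lambda>t. t i) ` ?J \<and> hi \<in> (\<lambda>t. t i) ` ?J \<and>
      (\<forall>t\<in>?J. lo \<le> t i \<and> t i \<le> hi) \<and> (\<lambda>t. t i) ` ?J = {lo..hi}"
    if i: "i \<in> {1..K}" for i
  proof -
    obtain lo hi where "lo \<le> hi" and interval: "(\<lambda>t. t i) ` ?J = {lo..hi}"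
      using coordinate_image_polyhedron_on[OF _ i
          J_set_coordinate_bounds[of K theta_s nu_l nu_u rho_l rho_u, unfolded C(3)]]
        theta unfolding C(3) by blast
    moreover have "t i \<in> {lo..hi}" if "t \<in> ?J" for t
      unfolding interval[symmetric] using that by (rule imageI)
    ultimately show ?thesis
      by (intro exI[of _ lo] exI[of _ hi]) auto
  qed
  show ?thesis
    by (intro conjI ballI marginal theta exI[of _ C]) (use C in \<open>simp_all add: polyhedron_on_def\<close>)
qed

end
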